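(* Let $\mathbf G_n=\mathbf G_n(d,\Omega,k,\Psi,\rho)$ be the Poisson random factor graph and assume $$\lim_{n\to\infty}\frac1{n^2}\sum_{i,j=1}^n\mathbb E\left\|\mu_{\mathbf G_n,x_i,x_j}-\mu_{\mathbf G_n,x_i}\otimes\mu_{\mathbf G_n,x_j}\right\|_{TV}=0 .$$ Then $$\frac1n\mathbb E\sum_{a\in F(\mathbf G_n)}\sum_{\sigma\in\Omega^{\partial a}}\left|\mu_{\mathbf G_n,a}(\sigma)-\frac{\psi_a(\sigma)\prod_{x\in\partial a}\mu_{\mathbf G_n,x\to a}(\sigma(x))}{\sum_{\tau\in\Omega^{\partial a}}\psi_a(\tau)\prod_{x\in\partial a}\mu_{\mathbf G_n,x\to a}(\tau(x))}\right|=o(1)\quad\text{as }n\to\infty.$$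
   Context: Factor graphs: Fix a finite set $\Omega$ of spins. A factor graph $G$ consists of variable nodes $V(G)$, constraint nodes $F(G)$, for each $a\in F(G)$ an ordered tuple $\partial a=(y_1,\ldots,y_{d(a)})$ of variable nodes and a weight function $\psi_a:\Omega^{d(a)}\to(0,\infty)$; for $\sigma\in\Omega^{\partial a}$, $\psi_a(\sigma)=\psi_a(\sigma(y_1),\ldots,\sigma(y_{d(a)}))$. Gibbs measure $\mu_G(\sigma)=Z_G^{-1}\prod_a\psi_a(\sigma(\partial a))$ on $\Omega^{V(G)}$; $\mu_{G,x}$, $\mu_{G,x,y}$ one- and two-point marginals; $\mu_{G,a}$ the joint distribution of the spins of the variables in $\partial a$. For $x\in\partial a$, $\mu_{G,x\to a}$ is the marginal of $x$ in the Gibbs measure of $G-a$ (constraint node $a$ deleted). Poisson random factor graph $\mathbf G_n(d,\Omega,k,\Psi,\rho)$: $d>0$, $k\geq3$, $\Psi$ a finite nonempty set of functions $\Omega^k\to(0,\infty)$, $\rho$ a distribution on $\Psi$, fixed as $n\to\infty$; variable nodes $x_1,\ldots,x_n$, $m\sim\mathrm{Po}(dn/k)$ constraint nodes, each independently with $\psi_{a_i}\sim\rho$ and $\partial a_i$ uniform in $\{x_1,\ldots,x_n\}^k$. *)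

theory Defs
  imports "HOL-Probability.Probability"
begin

text \<open>
  Variable nodes of G_n: the naturals 0..<n (x_1..x_n correspond to 0..n-1).
  A constraint node is a pair (psi, dA) of a weight function psi, applied to the
  list of spins of its variables, and the ordered k-tuple dA of variable nodes
  (a list of length k).  A factor graph on variables {..<n} is a list of
  constraint nodes (the constraint nodes are the list positions).
\<close>

type_synonym 's constr = "('s list \<Rightarrow> real) \<times> nat list"
type_synonym 's fgraph = "'s constr list"

definition configs :: "nat \<Rightarrow> (nat \<Rightarrow> 's) set" where
  "configs n = ({..<n} \<rightarrow>\<^sub>E (UNIV :: 's set))"

definition weight :: "'s fgraph \<Rightarrow> (nat \<Rightarrow> 's) \<Rightarrow> real" where
  "weight G \<sigma> = (\<Prod>a\<leftarrow>G. fst a (map \<sigma> (snd a)))"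

definition partition_fn :: "nat \<Rightarrow> 's::finite fgraph \<Rightarrow> real" where
  "partition_fn n G = (\<Sum>\<sigma>\<in>configs n. weight G \<sigma>)"

definition gibbs :: "nat \<Rightarrow> 's::finite fgraph \<Rightarrow> (nat \<Rightarrow> 's) \<Rightarrow> real" where
  "gibbs n G \<sigma> = weight G \<sigma> / partition_fn n G"

definition marg1 :: "nat \<Rightarrow> 's::finite fgraph \<Rightarrow> nat \<Rightarrow> 's \<Rightarrow> real" where
  "marg1 n G x s = (\<Sum>\<sigma>\<in>{\<sigma>\<in>configs n. \<sigma> x = s}. gibbs n G \<sigma>)"

definition marg2 :: "nat \<Rightarrow> 's::finite fgraph \<Rightarrow> nat \<Rightarrow> nat \<Rightarrow> 's \<Rightarrow> 's \<Rightarrow> real" where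
  "marg2 n G x y s t = (\<Sum>\<sigma>\<in>{\<sigma>\<in>configs n. \<sigma> x = s \<and> \<sigma> y = t}. gibbs n G \<sigma>)"

definition tv_pair :: "nat \<Rightarrow> 's::finite fgraph \<Rightarrow> nat \<Rightarrow> nat \<Rightarrow> real" where
  "tv_pair n G x y =
     (1/2) * (\<Sum>s\<in>(UNIV::'s set). \<Sum>t\<in>(UNIV::'s set).
                 \<bar>marg2 n G x y s t - marg1 n G x s * marg1 n G y t\<bar>)"

definition local_configs :: "nat list \<Rightarrow> (nat \<Rightarrow> 's) set" where
  "local_configs vs = (set vs \<rightarrow>\<^sub>E (UNIV :: 's set))"

definition marg_constr :: "nat \<Rightarrow> 's::finite fgraph \<Rightarrow> nat list \<Rightarrow> (nat \<Rightarrow> 's) \<Rightarrow> real" where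
  "marg_constr n G vs \<tau> =
     (\<Sum>\<sigma>\<in>{\<sigma>\<in>configs n. restrict \<sigma> (set vs) = \<tau>}. gibbs n G \<sigma>)"

definition del_constr :: "'s fgraph \<Rightarrow> nat \<Rightarrow> 's fgraph" where
  "del_constr G i = take i G @ drop (Suc i) G"

definition cavity :: "nat \<Rightarrow> 's::finite fgraph \<Rightarrow> nat \<Rightarrow> nat \<Rightarrow> 's \<Rightarrow> real" where
  "cavity n G i x s = marg1 n (del_constr G i) x s"

definition bp_weight :: "nat \<Rightarrow> 's::finite fgraph \<Rightarrow> nat \<Rightarrow> (nat \<Rightarrow> 's) \<Rightarrow> real" where
  "bp_weight n G i \<sigma> =
     fst (G ! i) (map \<sigma> (snd (G ! i))) * (\<Prod>x\<in>set (snd (G ! i)). cavity n G i x (\<sigma> x))"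

definition bp_error :: "nat \<Rightarrow> 's::finite fgraph \<Rightarrow> nat \<Rightarrow> real" where
  "bp_error n G i =
     (\<Sum>\<sigma>\<in>local_configs (snd (G ! i)).
        \<bar>marg_constr n G (snd (G ! i)) \<sigma>
          - bp_weight n G i \<sigma> / (\<Sum>\<tau>\<in>local_configs (snd (G ! i)). bp_weight n G i \<tau>)\<bar>)"

definition constr_pmf :: "nat \<Rightarrow> nat \<Rightarrow> ('s list \<Rightarrow> real) pmf \<Rightarrow> 's constr pmf" where
  "constr_pmf n k \<rho> =
     pair_pmf \<rho> (pmf_of_set {vs. length vs = k \<and> set vs \<subseteq> {..<n}})"

definition random_fg :: "nat \<Rightarrow> real \<Rightarrow> nat \<Rightarrow> ('s list \<Rightarrow> real) pmf \<Rightarrow> 's fgraph pmf" where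
  "random_fg n d k \<rho> =
     bind_pmf (poisson_pmf (d * real n / real k)) (\<lambda>m. replicate_pmf m (constr_pmf n k \<rho>))"

end

theory Submission
  imports Defs
begin

text \<open>
  Deleting a constraint node \<open>a\<close> turns the joint law of the spins on \<open>\<partial>a\<close> into its \<open>\<psi>\<^sub>a\<close>-tilt, and
  the belief propagation expression is the same tilt applied to the product of the cavity marginals.
  Since \<open>\<psi>\<^sub>a\<close> is bounded away from \<open>0\<close> and \<open>\<infinity>\<close>, the BP error of \<open>a\<close> is at most a constant times the
  \<open>\<ell>\<^sub>1\<close>-distance, in \<open>G - a\<close>, between the joint law of \<open>\<partial>a\<close> and the product of its marginals.
  Revealing the variables of \<open>\<partial>a\<close> one at a time, that distance grows by covariances of the form
  \<open>Cov(\<one>{\<sigma>\<^sub>\<partial> = \<tau>}, \<one>{\<sigma>\<^sub>y = s})\<close>; summed over \<open>y\<close> they are bounded, via Cauchy-Schwarz, by the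
  square root of the total pairwise covariance, i.e. by \<open>\<surd>(\<Sum>\<^sub>i\<^sub>,\<^sub>j TV\<^sub>i\<^sub>j)\<close>. Averaging over the uniform
  tuple \<open>\<partial>a\<close> therefore bounds the mean defect by \<open>O(\<surd>(\<Sum>\<^sub>i\<^sub>,\<^sub>j TV\<^sub>i\<^sub>j) / n)\<close>. Finally, for the Poisson
  model the expected sum over constraint nodes of a function of \<open>(G - a, a)\<close> equals \<open>dn/k\<close> times its
  expectation on \<open>G\<close> with an independent fresh constraint node \<open>a\<close> (Mecke's formula).
\<close>

section \<open>Covariances of a finite distribution\<close>

definition cov :: "'c set \<Rightarrow> ('c \<Rightarrow> real) \<Rightarrow> ('c \<Rightarrow> real) \<Rightarrow> ('c \<Rightarrow> real) \<Rightarrow> real" where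
  "cov C \<mu> f g = (\<Sum>\<sigma>\<in>C. \<mu> \<sigma> * f \<sigma> * g \<sigma>) - (\<Sum>\<sigma>\<in>C. \<mu> \<sigma> * f \<sigma>) * (\<Sum>\<sigma>\<in>C. \<mu> \<sigma> * g \<sigma>)"

lemma cov_centered:
  assumes "(\<Sum>\<sigma>\<in>C. \<mu> \<sigma>) = 1"
  shows "cov C \<mu> f g =
    (\<Sum>\<sigma>\<in>C. \<mu> \<sigma> * (f \<sigma> - (\<Sum>\<sigma>\<in>C. \<mu> \<sigma> * f \<sigma>)) * (g \<sigma> - (\<Sum>\<sigma>\<in>C. \<mu> \<sigma> * g \<sigma>)))"
proof -
  define F where "F = (\<Sum>\<sigma>\<in>C. \<mu> \<sigma> * f \<sigma>)"
  define H where "H = (\<Sum>\<sigma>\<in>C. \<mu> \<sigma> * g \<sigma>)"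
  have "(\<Sum>\<sigma>\<in>C. \<mu> \<sigma> * (f \<sigma> - F) * (g \<sigma> - H)) =
        (\<Sum>\<sigma>\<in>C. \<mu> \<sigma> * f \<sigma> * g \<sigma>) - H * (\<Sum>\<sigma>\<in>C. \<mu> \<sigma> * f \<sigma>) - F * (\<Sum>\<sigma>\<in>C. \<mu> \<sigma> * g \<sigma>)
          + F * H * (\<Sum>\<sigma>\<in>C. \<mu> \<sigma>)"
    by (simp add: algebra_simps sum.distrib sum_subtractf sum_distrib_left)
  also have "\<dots> = cov C \<mu> f g" using assms by (simp add: cov_def F_def H_def)
  finally show ?thesis by (simp add: F_def H_def)
qed

lemma abs_weighted_sum_le_sqrt:
  assumes "\<forall>\<sigma>\<in>C. 0 \<le> \<mu> \<sigma>"
  shows "\<bar>\<Sum>\<sigma>\<in>C. \<mu> \<sigma> * a \<sigma> * b \<sigma>\<bar>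
    \<le> sqrt (\<Sum>\<sigma>\<in>C. \<mu> \<sigma> * (a \<sigma>)\<^sup>2) * sqrt (\<Sum>\<sigma>\<in>C. \<mu> \<sigma> * (b \<sigma>)\<^sup>2)"
proof -
  have ab: "(\<Sum>\<sigma>\<in>C. \<mu> \<sigma> * a \<sigma> * b \<sigma>) = (\<Sum>\<sigma>\<in>C. (sqrt (\<mu> \<sigma>) * a \<sigma>) * (sqrt (\<mu> \<sigma>) * b \<sigma>))"
    using assms by (intro sum.cong) (auto simp: algebra_simps)
  have sq: "\<And>c. (\<Sum>\<sigma>\<in>C. \<mu> \<sigma> * (c \<sigma>)\<^sup>2) = (\<Sum>\<sigma>\<in>C. (sqrt (\<mu> \<sigma>) * c \<sigma>)\<^sup>2)"
    using assms by (intro sum.cong) (auto simp: power_mult_distrib)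
  have "(\<Sum>\<sigma>\<in>C. \<mu> \<sigma> * a \<sigma> * b \<sigma>)\<^sup>2 \<le> (\<Sum>\<sigma>\<in>C. \<mu> \<sigma> * (a \<sigma>)\<^sup>2) * (\<Sum>\<sigma>\<in>C. \<mu> \<sigma> * (b \<sigma>)\<^sup>2)"
    unfolding ab sq by (rule Cauchy_Schwarz_ineq_sum)
  then have "sqrt ((\<Sum>\<sigma>\<in>C. \<mu> \<sigma> * a \<sigma> * b \<sigma>)\<^sup>2)
      \<le> sqrt ((\<Sum>\<sigma>\<in>C. \<mu> \<sigma> * (a \<sigma>)\<^sup>2) * (\<Sum>\<sigma>\<in>C. \<mu> \<sigma> * (b \<sigma>)\<^sup>2))"
    by (rule real_sqrt_le_mono)
  then show ?thesis by (simp add: real_sqrt_mult)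
qed

lemma sum_abs_cov_le_sqrt:
  assumes mu: "\<forall>\<sigma>\<in>C. 0 \<le> \<mu> \<sigma>" and one: "(\<Sum>\<sigma>\<in>C. \<mu> \<sigma>) = 1"
    and f01: "\<forall>\<sigma>\<in>C. 0 \<le> f \<sigma> \<and> f \<sigma> \<le> 1"
  shows "(\<Sum>y\<in>Y. \<bar>cov C \<mu> f (g y)\<bar>) \<le> sqrt (\<Sum>y\<in>Y. \<Sum>y'\<in>Y. \<bar>cov C \<mu> (g y) (g y')\<bar>)"
proof -
  define E where "E h = (\<Sum>\<sigma>\<in>C. \<mu> \<sigma> * h \<sigma>)" for h
  define c where "c y = sgn (cov C \<mu> f (g y))" for y
  define u where "u y \<sigma> = g y \<sigma> - E (g y)" for y \<sigma>
  define h where "h \<sigma> = (\<Sum>y\<in>Y. c y * u y \<sigma>)" for \<sigma>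
  have cov_f: "\<And>y. cov C \<mu> f (g y) = (\<Sum>\<sigma>\<in>C. \<mu> \<sigma> * (f \<sigma> - E f) * u y \<sigma>)"
    using cov_centered[OF one] by (simp add: E_def u_def)
  have cov_g: "\<And>y y'. cov C \<mu> (g y) (g y') = (\<Sum>\<sigma>\<in>C. \<mu> \<sigma> * u y \<sigma> * u y' \<sigma>)"
    using cov_centered[OF one] by (simp add: E_def u_def)
  have var_f: "(\<Sum>\<sigma>\<in>C. \<mu> \<sigma> * (f \<sigma> - E f)\<^sup>2) \<le> 1"
  proof -
    have "(\<Sum>\<sigma>\<in>C. \<mu> \<sigma> * (f \<sigma> - E f)\<^sup>2) = cov C \<mu> f f"
      using cov_centered[OF one, of f f] by (simp add: E_def power2_eq_square mult_ac)
    also have "\<dots> \<le> (\<Sum>\<sigma>\<in>C. \<mu> \<sigma> * f \<sigma> * f \<sigma>)" by (simp add: cov_def)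
    also have "\<dots> \<le> (\<Sum>\<sigma>\<in>C. \<mu> \<sigma>)"
      using f01 mu by (intro sum_mono) (simp add: mult.assoc mult_left_le mult_le_one)
    finally show ?thesis using one by simp
  qed
  have var_h: "(\<Sum>\<sigma>\<in>C. \<mu> \<sigma> * (h \<sigma>)\<^sup>2) \<le> (\<Sum>y\<in>Y. \<Sum>y'\<in>Y. \<bar>cov C \<mu> (g y) (g y')\<bar>)"
  proof -
    have "(\<Sum>\<sigma>\<in>C. \<mu> \<sigma> * (h \<sigma>)\<^sup>2) = (\<Sum>y\<in>Y. \<Sum>y'\<in>Y. c y * c y' * cov C \<mu> (g y) (g y'))"
      unfolding cov_g h_def power2_eq_square sum_product
      by (simp add: sum_distrib_left sum_distrib_right mult_ac sum.swap[of _ C])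
    also have "\<dots> \<le> (\<Sum>y\<in>Y. \<Sum>y'\<in>Y. \<bar>cov C \<mu> (g y) (g y')\<bar>)"
      by (intro sum_mono) (auto simp: c_def sgn_if)
    finally show ?thesis .
  qed
  \<comment> \<open>Choosing signs \<open>c y\<close> turns the sum of absolute values into a single covariance with \<open>h\<close>.\<close>
  have "(\<Sum>y\<in>Y. \<bar>cov C \<mu> f (g y)\<bar>) = (\<Sum>y\<in>Y. c y * cov C \<mu> f (g y))"
    by (intro sum.cong) (auto simp: c_def sgn_if)
  also have "\<dots> = (\<Sum>\<sigma>\<in>C. \<mu> \<sigma> * (f \<sigma> - E f) * h \<sigma>)"
    unfolding cov_f h_def by (simp add: sum_distrib_left sum_distrib_right mult_ac sum.swap[of _ Y])
  also have "\<dots> \<le> \<bar>\<Sum>\<sigma>\<in>C. \<mu> \<sigma> * (f \<sigma> - E f) * h \<sigma>\<bar>" by simp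
  also have "\<dots> \<le> sqrt (\<Sum>\<sigma>\<in>C. \<mu> \<sigma> * (f \<sigma> - E f)\<^sup>2) * sqrt (\<Sum>\<sigma>\<in>C. \<mu> \<sigma> * (h \<sigma>)\<^sup>2)"
    by (rule abs_weighted_sum_le_sqrt[OF mu])
  also have "\<dots> \<le> 1 * sqrt (\<Sum>y\<in>Y. \<Sum>y'\<in>Y. \<bar>cov C \<mu> (g y) (g y')\<bar>)"
    using var_f var_h mu by (intro mult_mono) (auto intro!: sum_nonneg)
  finally show ?thesis by simp
qed


definition gibbs_normalized :: "nat \<Rightarrow> 's::finite fgraph \<Rightarrow> bool" where
  "gibbs_normalized n G \<longleftrightarrow>
     (\<forall>\<sigma>\<in>configs n. 0 \<le> gibbs n G \<sigma>) \<and> (\<Sum>\<sigma>\<in>configs n. gibbs n G \<sigma>) = 1"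

lemma finite_configs [simp]: "finite (configs n :: (nat \<Rightarrow> 's::finite) set)"
  by (simp add: configs_def finite_PiE)

lemma finite_local_configs [simp]: "finite (local_configs vs :: (nat \<Rightarrow> 's::finite) set)"
  by (simp add: local_configs_def finite_PiE)

lemma sum_filter_eq_sum_of_bool:
  "finite A \<Longrightarrow> (\<Sum>\<sigma>\<in>{\<sigma>\<in>A. P \<sigma>}. f \<sigma>) = (\<Sum>\<sigma>\<in>A. f \<sigma> * of_bool (P \<sigma>) :: real)"
  by (simp add: Collect_conj_eq Int_commute)

lemma marg1_eq_sum: "marg1 n G x s = (\<Sum>\<sigma>\<in>configs n. gibbs n G \<sigma> * of_bool (\<sigma> x = s))"
  unfolding marg1_def by (rule sum_filter_eq_sum_of_bool) simp

lemma marg2_eq_sum: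
  "marg2 n G x y s t = (\<Sum>\<sigma>\<in>configs n. gibbs n G \<sigma> * of_bool (\<sigma> x = s) * of_bool (\<sigma> y = t))"
  unfolding marg2_def by (simp add: sum_filter_eq_sum_of_bool mult.assoc flip: of_bool_conj)

lemma marg_constr_eq_sum:
  "marg_constr n G vs \<tau> = (\<Sum>\<sigma>\<in>configs n. gibbs n G \<sigma> * of_bool (restrict \<sigma> (set vs) = \<tau>))"
  unfolding marg_constr_def by (rule sum_filter_eq_sum_of_bool) simp

lemma marg1_nonneg: "gibbs_normalized n G \<Longrightarrow> 0 \<le> marg1 n G x s"
  unfolding marg1_def gibbs_normalized_def by (auto intro!: sum_nonneg)

lemma marg2_nonneg: "gibbs_normalized n G \<Longrightarrow> 0 \<le> marg2 n G x y s t"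
  unfolding marg2_def gibbs_normalized_def by (auto intro!: sum_nonneg)

lemma marg_constr_nonneg: "gibbs_normalized n G \<Longrightarrow> 0 \<le> marg_constr n G vs \<tau>"
  unfolding marg_constr_def gibbs_normalized_def by (auto intro!: sum_nonneg)

lemma marg1_le_1:
  assumes "gibbs_normalized n G"
  shows "marg1 n G x s \<le> 1"
proof -
  have "marg1 n G x s \<le> (\<Sum>\<sigma>\<in>configs n. gibbs n G \<sigma>)"
    unfolding marg1_def using assms unfolding gibbs_normalized_def by (intro sum_mono2) auto
  then show ?thesis using assms unfolding gibbs_normalized_def by simp
qed

lemma marg2_le_1:
  assumes "gibbs_normalized n G"
  shows "marg2 n G x y s t \<le> 1"
proof -
  have "marg2 n G x y s t \<le> (\<Sum>\<sigma>\<in>configs n. gibbs n G \<sigma>)"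
    unfolding marg2_def using assms unfolding gibbs_normalized_def by (intro sum_mono2) auto
  then show ?thesis using assms unfolding gibbs_normalized_def by simp
qed

lemma sum_marg1_eq_1:
  fixes G :: "'s::finite fgraph"
  assumes "gibbs_normalized n G"
  shows "(\<Sum>s\<in>UNIV. marg1 n G y s) = 1"
proof -
  have "(\<Sum>s\<in>UNIV. marg1 n G y s) = (\<Sum>\<sigma>\<in>configs n. gibbs n G \<sigma>)"
    unfolding marg1_def by (rule sum.group) auto
  then show ?thesis using assms by (simp add: gibbs_normalized_def)
qed

lemma cov_indicators_eq:
  "cov (configs n) (gibbs n G) (\<lambda>\<sigma>. of_bool (\<sigma> x = s)) (\<lambda>\<sigma>. of_bool (\<sigma> y = t))
     = marg2 n G x y s t - marg1 n G x s * marg1 n G y t"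
  by (simp only: cov_def marg1_eq_sum marg2_eq_sum)

lemma tv_pair_nonneg: "0 \<le> tv_pair n G x y"
  unfolding tv_pair_def by (auto intro!: sum_nonneg)

lemma tv_pair_le:
  fixes G :: "'s::finite fgraph"
  assumes P: "gibbs_normalized n G"
  shows "tv_pair n G x y \<le> real CARD('s) ^ 2"
proof -
  have "\<bar>marg2 n G x y s t - marg1 n G x s * marg1 n G y t\<bar> \<le> 1" for s t
  proof -
    have "0 \<le> marg1 n G x s * marg1 n G y t" "marg1 n G x s * marg1 n G y t \<le> 1"
      using marg1_nonneg[OF P] marg1_le_1[OF P] by (auto intro: mult_le_one)
    then show ?thesis using marg2_nonneg[OF P, of x y s t] marg2_le_1[OF P, of x y s t]
      unfolding abs_le_iff by linarith
  qed
  then have "tv_pair n G x y \<le> (1/2) * (\<Sum>s\<in>(UNIV::'s set). \<Sum>t\<in>(UNIV::'s set). 1)"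
    unfolding tv_pair_def by (intro mult_left_mono sum_mono) auto
  also have "\<dots> \<le> real CARD('s) ^ 2" by (simp add: power2_eq_square)
  finally show ?thesis .
qed

lemma abs_cov_indicators_le_tv_pair:
  "\<bar>cov (configs n) (gibbs n G) (\<lambda>\<sigma>. of_bool (\<sigma> x = s)) (\<lambda>\<sigma>. of_bool (\<sigma> y = s))\<bar>
     \<le> 2 * tv_pair n G x y"
proof -
  let ?F = "\<lambda>s t. \<bar>marg2 n G x y s t - marg1 n G x s * marg1 n G y t\<bar>"
  have "?F s s \<le> (\<Sum>t\<in>UNIV. ?F s t)" by (rule member_le_sum) auto
  also have "\<dots> \<le> (\<Sum>s\<in>UNIV. \<Sum>t\<in>UNIV. ?F s t)"
    by (rule member_le_sum[where f="\<lambda>s. \<Sum>t\<in>UNIV. ?F s t"]) (auto intro: sum_nonneg)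
  finally show ?thesis by (simp add: cov_indicators_eq tv_pair_def)
qed

definition tv_decorr :: "nat \<Rightarrow> 's::finite fgraph \<Rightarrow> real" where
  "tv_decorr n G = (\<Sum>i<n. \<Sum>j<n. tv_pair n G i j)"

lemma tv_decorr_nonneg: "0 \<le> tv_decorr n G"
  unfolding tv_decorr_def by (auto intro!: sum_nonneg tv_pair_nonneg)

section \<open>Decorrelation of tuples of variables\<close>

definition indep_defect :: "nat \<Rightarrow> 's::finite fgraph \<Rightarrow> nat list \<Rightarrow> real" where
  "indep_defect n G vs = (\<Sum>\<tau>\<in>local_configs vs.
      \<bar>marg_constr n G vs \<tau> - (\<Prod>x\<in>set vs. marg1 n G x (\<tau> x))\<bar>)"

definition cov_tuple_var :: "nat \<Rightarrow> 's::finite fgraph \<Rightarrow> nat list \<Rightarrow> nat \<Rightarrow> real" where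
  "cov_tuple_var n G ws y = (\<Sum>s\<in>(UNIV::'s set). \<Sum>\<tau>\<in>local_configs ws.
      \<bar>cov (configs n) (gibbs n G) (\<lambda>\<sigma>. of_bool (restrict \<sigma> (set ws) = \<tau>)) (\<lambda>\<sigma>. of_bool (\<sigma> y = s))\<bar>)"

lemma indep_defect_nonneg: "0 \<le> indep_defect n G vs"
  unfolding indep_defect_def by (auto intro!: sum_nonneg)

lemma cov_tuple_var_nonneg: "0 \<le> cov_tuple_var n G ws y"
  unfolding cov_tuple_var_def by (auto intro!: sum_nonneg)

lemma sum_cov_tuple_var_le:
  fixes G :: "'s::finite fgraph"
  assumes P: "gibbs_normalized n G"
  shows "(\<Sum>y<n. cov_tuple_var n G ws y)
    \<le> real CARD('s) * real (card (local_configs ws :: (nat \<Rightarrow> 's) set)) * sqrt (2 * tv_decorr n G)"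
proof -
  have sum_y: "(\<Sum>y<n. \<bar>cov (configs n) (gibbs n G) (\<lambda>\<sigma>. of_bool (restrict \<sigma> (set ws) = \<tau>))
      (\<lambda>\<sigma>. of_bool (\<sigma> y = s))\<bar>) \<le> sqrt (2 * tv_decorr n G)" for s :: 's and \<tau>
  proof -
    have "(\<Sum>y<n. \<bar>cov (configs n) (gibbs n G) (\<lambda>\<sigma>. of_bool (restrict \<sigma> (set ws) = \<tau>))
        (\<lambda>\<sigma>. of_bool (\<sigma> y = s))\<bar>)
      \<le> sqrt (\<Sum>y<n. \<Sum>y'<n. \<bar>cov (configs n) (gibbs n G)
            (\<lambda>\<sigma>. of_bool (\<sigma> y = s)) (\<lambda>\<sigma>. of_bool (\<sigma> y' = s))\<bar>)"
      using P unfolding gibbs_normalized_def by (intro sum_abs_cov_le_sqrt) auto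
    also have "\<dots> \<le> sqrt (\<Sum>y<n. \<Sum>y'<n. 2 * tv_pair n G y y')"
      by (intro real_sqrt_le_mono sum_mono abs_cov_indicators_le_tv_pair)
    finally show ?thesis by (simp add: tv_decorr_def sum_distrib_left)
  qed
  have "(\<Sum>y<n. cov_tuple_var n G ws y) = (\<Sum>s\<in>(UNIV::'s set). \<Sum>\<tau>\<in>local_configs ws. \<Sum>y<n.
      \<bar>cov (configs n) (gibbs n G) (\<lambda>\<sigma>. of_bool (restrict \<sigma> (set ws) = \<tau>)) (\<lambda>\<sigma>. of_bool (\<sigma> y = s))\<bar>)"
    unfolding cov_tuple_var_def by (simp add: sum.swap[of _ "{..<n}"])
  also have "\<dots> \<le> (\<Sum>s\<in>(UNIV::'s set). \<Sum>\<tau>\<in>(local_configs ws :: (nat \<Rightarrow> 's) set).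
      sqrt (2 * tv_decorr n G))"
    by (intro sum_mono sum_y)
  finally show ?thesis by simp
qed

lemma restrict_insert_eq_fun_upd_iff:
  assumes "g \<in> S \<rightarrow>\<^sub>E UNIV" "y \<notin> S"
  shows "restrict \<sigma> (insert y S) = g(y := s) \<longleftrightarrow> restrict \<sigma> S = g \<and> \<sigma> y = s"
  using assms by (auto simp: fun_eq_iff PiE_def extensional_def split: if_splits)

lemma inj_on_fun_upd_local_configs:
  assumes "y \<notin> set ws"
  shows "inj_on (\<lambda>(s, g). g(y := s)) (UNIV \<times> local_configs ws)"
proof (rule inj_onI, clarify)
  fix s g s' g' assume g: "g \<in> local_configs ws" and g': "g' \<in> local_configs ws"
    and eq: "g(y := s) = g'(y := s')"
  have "g x = g' x" for x
    using fun_cong[OF eq, of x] g g' assms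
    by (cases "x = y") (auto simp: local_configs_def PiE_def extensional_def)
  then show "s = s' \<and> g = g'" using fun_cong[OF eq, of y] by auto
qed

lemma indep_defect_Cons_le:
  fixes G :: "'s::finite fgraph"
  assumes P: "gibbs_normalized n G"
  shows "indep_defect n G (y # ws) \<le> indep_defect n G ws + cov_tuple_var n G ws y"
proof (cases "y \<in> set ws")
  case True
  then show ?thesis
    using cov_tuple_var_nonneg[of n G ws y]
    by (simp add: indep_defect_def local_configs_def marg_constr_def insert_absorb)
next
  case y: False
  let ?S = "set ws"
  let ?L = "local_configs ws :: (nat \<Rightarrow> 's) set"
  let ?m = "marg1 n G"
  let ?M = "marg_constr n G ws"
  let ?Q = "\<lambda>g. \<Prod>x\<in>?S. ?m x (g x)"
  let ?cv = "\<lambda>s g. cov (configs n) (gibbs n G) (\<lambda>\<sigma>. of_bool (restrict \<sigma> ?S = g)) (\<lambda>\<sigma>. of_bool (\<sigma> y = s))"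
  have split: "marg_constr n G (y # ws) (g(y := s)) - (\<Prod>x\<in>set (y # ws). ?m x ((g(y := s)) x))
      = ?cv s g + ?m y s * (?M g - ?Q g)" if g: "g \<in> ?L" for s g
  proof -
    have gS: "g \<in> ?S \<rightarrow>\<^sub>E UNIV" using g by (simp add: local_configs_def)
    have "marg_constr n G (y # ws) (g(y := s)) =
        (\<Sum>\<sigma>\<in>configs n. gibbs n G \<sigma> * of_bool (restrict \<sigma> ?S = g) * of_bool (\<sigma> y = s))"
      unfolding marg_constr_eq_sum
      by (intro sum.cong refl) (simp add: restrict_insert_eq_fun_upd_iff[OF gS y])
    then have "?cv s g = marg_constr n G (y # ws) (g(y := s)) - ?M g * ?m y s"
      by (simp only: cov_def marg_constr_eq_sum marg1_eq_sum)
    moreover have "(\<Prod>x\<in>?S. ?m x ((g(y := s)) x)) = ?Q g"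
      using y by (intro prod.cong) auto
    then have "(\<Prod>x\<in>set (y # ws). ?m x ((g(y := s)) x)) = ?m y s * ?Q g"
      using y by simp
    ultimately show ?thesis by (simp add: algebra_simps)
  qed
  have term_le: "\<bar>marg_constr n G (y # ws) (g(y := s)) - (\<Prod>x\<in>set (y # ws). ?m x ((g(y := s)) x))\<bar>
      \<le> \<bar>?cv s g\<bar> + ?m y s * \<bar>?M g - ?Q g\<bar>" if "g \<in> ?L" for s g
  proof -
    have "\<bar>?cv s g + ?m y s * (?M g - ?Q g)\<bar> \<le> \<bar>?cv s g\<bar> + \<bar>?m y s * (?M g - ?Q g)\<bar>"
      by (rule abs_triangle_ineq)
    then show ?thesis using marg1_nonneg[OF P, of y s] by (simp only: split[OF that] abs_mult abs_of_nonneg)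
  qed
  have local_configs_Cons: "local_configs (y # ws) = (\<lambda>(s, g). g(y := s)) ` (UNIV \<times> ?L)"
    by (simp add: local_configs_def PiE_insert_eq)
  have "indep_defect n G (y # ws) = (\<Sum>(s, g)\<in>UNIV \<times> ?L.
      \<bar>marg_constr n G (y # ws) (g(y := s)) - (\<Prod>x\<in>set (y # ws). ?m x ((g(y := s)) x))\<bar>)"
    unfolding indep_defect_def local_configs_Cons
    by (subst sum.reindex[OF inj_on_fun_upd_local_configs[OF y]]) (simp add: case_prod_beta)
  also have "\<dots> = (\<Sum>s\<in>UNIV. \<Sum>g\<in>?L.
      \<bar>marg_constr n G (y # ws) (g(y := s)) - (\<Prod>x\<in>set (y # ws). ?m x ((g(y := s)) x))\<bar>)"
    by (simp add: sum.cartesian_product)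
  also have "\<dots> \<le> (\<Sum>s\<in>UNIV. \<Sum>g\<in>?L. \<bar>?cv s g\<bar> + ?m y s * \<bar>?M g - ?Q g\<bar>)"
    by (intro sum_mono term_le) auto
  also have "\<dots> = cov_tuple_var n G ws y + (\<Sum>s\<in>UNIV. ?m y s) * indep_defect n G ws"
    by (simp add: cov_tuple_var_def indep_defect_def sum.distrib sum_distrib_left sum_distrib_right
        sum.swap[of _ "UNIV::'s set"])
  finally show ?thesis using sum_marg1_eq_1[OF P] by simp
qed

lemma indep_defect_Nil:
  fixes G :: "'s::finite fgraph"
  assumes "gibbs_normalized n G"
  shows "indep_defect n G [] = 0"
proof -
  have "(local_configs [] :: (nat \<Rightarrow> 's) set) = {\<lambda>_. undefined}"
    by (simp add: local_configs_def)
  moreover have "marg_constr n G [] (\<lambda>_. undefined) = (\<Sum>\<sigma>\<in>configs n. gibbs n G \<sigma>)"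
    unfolding marg_constr_def by (intro sum.cong) auto
  ultimately show ?thesis using assms by (simp add: indep_defect_def gibbs_normalized_def)
qed

definition var_tuples :: "nat \<Rightarrow> nat \<Rightarrow> nat list set" where
  "var_tuples n j = {xs. set xs \<subseteq> {..<n} \<and> length xs = j}"

lemma finite_var_tuples [simp]: "finite (var_tuples n j)"
  by (simp add: var_tuples_def finite_lists_length_eq)

lemma card_var_tuples: "card (var_tuples n j) = n ^ j"
  by (simp add: var_tuples_def card_lists_length_eq)

lemma card_local_configs_le:
  "real (card (local_configs ws :: (nat \<Rightarrow> 's::finite) set)) \<le> real CARD('s) ^ length ws"
proof -
  have "card (local_configs ws :: (nat \<Rightarrow> 's) set) = CARD('s) ^ card (set ws)"
    by (simp add: local_configs_def card_PiE)
  moreover have "real CARD('s) ^ card (set ws) \<le> real CARD('s) ^ length ws"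
    by (rule power_increasing) (auto simp: card_length Suc_le_eq)
  ultimately show ?thesis by simp
qed

lemma sum_indep_defect_le:
  fixes G :: "'s::finite fgraph"
  assumes P: "gibbs_normalized n G"
  shows "real n * (\<Sum>vs\<in>var_tuples n j. indep_defect n G vs)
    \<le> real j * real n ^ j * real CARD('s) ^ j * sqrt (2 * tv_decorr n G)"
proof (induction j)
  case 0
  have "var_tuples n 0 = {[]}" by (auto simp: var_tuples_def)
  then show ?case using indep_defect_Nil[OF P] by simp
next
  case (Suc j)
  define r where "r = sqrt (2 * tv_decorr n G)"
  define c where "c = real CARD('s)"
  have r: "0 \<le> r" by (simp add: r_def tv_decorr_nonneg)
  have c: "1 \<le> c" by (simp add: c_def Suc_le_eq)
  have cov_le: "(\<Sum>y<n. cov_tuple_var n G ws y) \<le> c * c ^ j * r" if "ws \<in> var_tuples n j" for ws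
  proof -
    have "(\<Sum>y<n. cov_tuple_var n G ws y) \<le> c * real (card (local_configs ws :: (nat \<Rightarrow> 's) set)) * r"
      using sum_cov_tuple_var_le[OF P] by (simp add: c_def r_def)
    also have "\<dots> \<le> c * c ^ j * r"
      using card_local_configs_le[of ws] that c r
      by (intro mult_right_mono mult_left_mono) (auto simp: var_tuples_def c_def)
    finally show ?thesis .
  qed
  have "var_tuples n (Suc j) = (\<lambda>(ws, y). y # ws) ` (var_tuples n j \<times> {..<n})"
    unfolding var_tuples_def by (rule lists_length_Suc_eq)
  moreover have "inj_on (\<lambda>(ws, y). y # ws) (var_tuples n j \<times> {..<n})"
    by (auto simp: inj_on_def)
  ultimately have "(\<Sum>vs\<in>var_tuples n (Suc j). indep_defect n G vs)
      = (\<Sum>ws\<in>var_tuples n j. \<Sum>y<n. indep_defect n G (y # ws))"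
    by (simp add: sum.reindex sum.cartesian_product split_def)
  also have "\<dots> \<le> (\<Sum>ws\<in>var_tuples n j. \<Sum>y<n. indep_defect n G ws + cov_tuple_var n G ws y)"
    by (intro sum_mono indep_defect_Cons_le[OF P])
  also have "\<dots> = real n * (\<Sum>ws\<in>var_tuples n j. indep_defect n G ws)
      + (\<Sum>ws\<in>var_tuples n j. \<Sum>y<n. cov_tuple_var n G ws y)"
    by (simp add: sum.distrib sum_distrib_left)
  also have "(\<Sum>ws\<in>var_tuples n j. \<Sum>y<n. cov_tuple_var n G ws y) \<le> (\<Sum>ws\<in>var_tuples n j. c * c ^ j * r)"
    by (rule sum_mono[OF cov_le])
  also have "real n * (\<Sum>ws\<in>var_tuples n j. indep_defect n G ws) \<le> real j * real n ^ j * c ^ Suc j * r"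
  proof -
    have "c ^ j \<le> c ^ Suc j" using c by (intro power_increasing) auto
    then have "real j * real n ^ j * c ^ j * r \<le> real j * real n ^ j * c ^ Suc j * r"
      using r by (intro mult_right_mono mult_left_mono) auto
    then show ?thesis using Suc.IH by (simp add: c_def r_def)
  qed
  finally have "(\<Sum>vs\<in>var_tuples n (Suc j). indep_defect n G vs) \<le> real (Suc j) * real n ^ j * c ^ Suc j * r"
    by (simp add: card_var_tuples algebra_simps)
  then have "real n * (\<Sum>vs\<in>var_tuples n (Suc j). indep_defect n G vs)
      \<le> real n * (real (Suc j) * real n ^ j * c ^ Suc j * r)"
    by (rule mult_left_mono) simp
  then show ?case by (simp add: c_def r_def mult_ac)
qed


section \<open>The BP error of a single constraint node\<close>

lemma sum_abs_diff_tilted_le: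
  fixes w p q :: "'a \<Rightarrow> real"
  assumes "0 < wmin"
    and w: "\<forall>\<tau>\<in>T. wmin \<le> w \<tau> \<and> w \<tau> \<le> wmax"
    and p0: "\<forall>\<tau>\<in>T. 0 \<le> p \<tau>" and q0: "\<forall>\<tau>\<in>T. 0 \<le> q \<tau>" and p1: "(\<Sum>\<tau>\<in>T. p \<tau>) = 1"
  shows "(\<Sum>\<tau>\<in>T. \<bar>w \<tau> * p \<tau> / (\<Sum>\<tau>'\<in>T. w \<tau>' * p \<tau>') - w \<tau> * q \<tau> / (\<Sum>\<tau>'\<in>T. w \<tau>' * q \<tau>')\<bar>)
     \<le> 2 * (wmax / wmin) * (\<Sum>\<tau>\<in>T. \<bar>p \<tau> - q \<tau>\<bar>)"
proof -
  define P where "P = (\<Sum>\<tau>'\<in>T. w \<tau>' * p \<tau>')"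
  define Q where "Q = (\<Sum>\<tau>'\<in>T. w \<tau>' * q \<tau>')"
  define D where "D = (\<Sum>\<tau>\<in>T. w \<tau> * \<bar>p \<tau> - q \<tau>\<bar>)"
  have w0: "\<forall>\<tau>\<in>T. 0 < w \<tau>" using w \<open>0 < wmin\<close> by force
  have "wmin * (\<Sum>\<tau>\<in>T. p \<tau>) \<le> P"
    unfolding P_def sum_distrib_left using w p0 by (intro sum_mono mult_right_mono) auto
  then have P_ge: "wmin \<le> P" using p1 by simp
  then have P_pos: "0 < P" using \<open>0 < wmin\<close> by simp
  have Q0: "0 \<le> Q" unfolding Q_def using w0 q0 by (intro sum_nonneg) (simp add: less_imp_le)
  have D0: "0 \<le> D" unfolding D_def using w0 by (intro sum_nonneg) (simp add: less_imp_le)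
  have D_le: "D \<le> wmax * (\<Sum>\<tau>\<in>T. \<bar>p \<tau> - q \<tau>\<bar>)"
    unfolding D_def sum_distrib_left using w by (intro sum_mono mult_right_mono) auto
  have term_le: "\<bar>w \<tau> * p \<tau> / P - w \<tau> * q \<tau> / Q\<bar> \<le> w \<tau> * \<bar>p \<tau> - q \<tau>\<bar> / P + w \<tau> * q \<tau> * \<bar>1 / P - 1 / Q\<bar>"
    if "\<tau> \<in> T" for \<tau>
  proof -
    have "w \<tau> * p \<tau> / P - w \<tau> * q \<tau> / Q = w \<tau> * (p \<tau> - q \<tau>) / P + w \<tau> * q \<tau> * (1 / P - 1 / Q)"
      using P_pos by (simp add: field_simps)
    also have "\<bar>\<dots>\<bar> \<le> \<bar>w \<tau> * (p \<tau> - q \<tau>) / P\<bar> + \<bar>w \<tau> * q \<tau> * (1 / P - 1 / Q)\<bar>"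
      by (rule abs_triangle_ineq)
    also have "\<dots> = w \<tau> * \<bar>p \<tau> - q \<tau>\<bar> / P + w \<tau> * q \<tau> * \<bar>1 / P - 1 / Q\<bar>"
      using w0 q0 P_pos that by (simp add: abs_mult abs_divide less_imp_le)
    finally show ?thesis .
  qed
  \<comment> \<open>The change of normalisation costs no more than the change of the unnormalised weights.\<close>
  have norm_le: "Q * \<bar>1 / P - 1 / Q\<bar> \<le> D / P"
  proof (cases "Q = 0")
    case True then show ?thesis using D0 P_pos by simp
  next
    case False
    then have "Q * \<bar>1 / P - 1 / Q\<bar> = \<bar>Q - P\<bar> / P"
      using P_pos Q0 by (simp add: field_simps abs_divide abs_mult)
    also have "\<bar>Q - P\<bar> = \<bar>\<Sum>\<tau>\<in>T. w \<tau> * (q \<tau> - p \<tau>)\<bar>"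
      by (simp add: P_def Q_def algebra_simps sum_subtractf)
    also have "\<dots> \<le> (\<Sum>\<tau>\<in>T. \<bar>w \<tau> * (q \<tau> - p \<tau>)\<bar>)" by (rule sum_abs)
    also have "\<dots> = D" unfolding D_def using w0 by (intro sum.cong) (auto simp: abs_mult abs_minus_commute)
    finally show ?thesis using P_pos by (simp add: divide_right_mono)
  qed
  have "(\<Sum>\<tau>\<in>T. \<bar>w \<tau> * p \<tau> / P - w \<tau> * q \<tau> / Q\<bar>)
      \<le> (\<Sum>\<tau>\<in>T. w \<tau> * \<bar>p \<tau> - q \<tau>\<bar> / P + w \<tau> * q \<tau> * \<bar>1 / P - 1 / Q\<bar>)"
    by (intro sum_mono term_le)
  also have "\<dots> = D / P + Q * \<bar>1 / P - 1 / Q\<bar>"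
    by (simp add: sum.distrib D_def Q_def sum_divide_distrib sum_distrib_right)
  also have "\<dots> \<le> 2 * (D / wmin)"
    using norm_le D0 P_ge \<open>0 < wmin\<close> divide_left_mono[of wmin P D] by simp
  also have "\<dots> \<le> 2 * (wmax / wmin) * (\<Sum>\<tau>\<in>T. \<bar>p \<tau> - q \<tau>\<bar>)"
    using D_le \<open>0 < wmin\<close> by (simp add: divide_right_mono)
  finally show ?thesis by (simp add: P_def Q_def)
qed

definition positive_weights :: "'s fgraph \<Rightarrow> bool" where
  "positive_weights G \<longleftrightarrow> (\<forall>a\<in>set G. \<forall>\<sigma>. 0 < fst a (map \<sigma> (snd a)))"

lemma weight_pos: "positive_weights G \<Longrightarrow> 0 < weight G \<sigma>"
  unfolding positive_weights_def weight_def by (induction G) auto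

lemma partition_fn_pos:
  fixes G :: "'s::finite fgraph"
  assumes "positive_weights G"
  shows "0 < partition_fn n G"
proof -
  have "configs n \<noteq> {}" by (auto simp: configs_def PiE_eq_empty_iff)
  then show ?thesis unfolding partition_fn_def using weight_pos[OF assms] by (intro sum_pos) auto
qed

lemma gibbs_normalized_if_positive_weights:
  fixes G :: "'s::finite fgraph"
  assumes "positive_weights G"
  shows "gibbs_normalized n G"
  using partition_fn_pos[OF assms, of n] weight_pos[OF assms]
  by (auto simp: gibbs_normalized_def gibbs_def partition_fn_def sum_divide_distrib[symmetric] less_imp_le)

lemma positive_weights_del_constr: "positive_weights G \<Longrightarrow> positive_weights (del_constr G i)"
  unfolding positive_weights_def del_constr_def using set_take_subset set_drop_subset by fastforce

lemma weight_del_constr: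
  assumes "i < length G"
  shows "weight G \<sigma> = fst (G!i) (map \<sigma> (snd (G!i))) * weight (del_constr G i) \<sigma>"
proof -
  have "weight G \<sigma> = weight (take i G @ G!i # drop (Suc i) G) \<sigma>"
    using id_take_nth_drop[OF assms] by simp
  then show ?thesis by (simp add: weight_def del_constr_def)
qed

lemma marg_constr_eq_tilt_del_constr:
  fixes G :: "'s::finite fgraph"
  assumes i: "i < length G" and pos: "positive_weights G"
  defines "vs \<equiv> snd (G!i)" and "w \<equiv> \<lambda>\<tau>. fst (G!i) (map \<tau> (snd (G!i)))"
  shows "marg_constr n G vs \<tau> = w \<tau> * marg_constr n (del_constr G i) vs \<tau>
    / (\<Sum>\<tau>'\<in>local_configs vs. w \<tau>' * marg_constr n (del_constr G i) vs \<tau>')"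
proof -
  define H where "H = del_constr G i"
  let ?F = "\<lambda>\<tau>. {\<sigma>\<in>configs n. restrict \<sigma> (set vs) = \<tau>}"
  define WH where "WH \<tau> = (\<Sum>\<sigma>\<in>?F \<tau>. weight H \<sigma>)" for \<tau>
  have ZH: "0 < partition_fn n H"
    unfolding H_def by (rule partition_fn_pos[OF positive_weights_del_constr[OF pos]])
  have F_weight: "(\<Sum>\<sigma>\<in>?F \<tau>. weight G \<sigma>) = w \<tau> * WH \<tau>" for \<tau>
    unfolding WH_def sum_distrib_left
  proof (intro sum.cong refl)
    fix \<sigma> assume "\<sigma> \<in> ?F \<tau>"
    then have "map \<sigma> vs = map \<tau> vs" by (auto simp: fun_eq_iff restrict_def split: if_splits)
    then have "fst (G!i) (map \<sigma> vs) = w \<tau>" unfolding w_def vs_def by (rule arg_cong)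
    then show "weight G \<sigma> = w \<tau> * weight H \<sigma>"
      by (simp add: weight_del_constr[OF i] vs_def H_def)
  qed
  have group: "(\<Sum>\<sigma>\<in>configs n. f \<sigma>) = (\<Sum>\<tau>\<in>(local_configs vs :: (nat \<Rightarrow> 's) set). \<Sum>\<sigma>\<in>?F \<tau>. f \<sigma>)" for f
    by (rule sum.group[symmetric]) (auto simp: local_configs_def finite_PiE)
  have ZG: "partition_fn n G = (\<Sum>\<tau>\<in>local_configs vs. w \<tau> * WH \<tau>)"
    unfolding partition_fn_def group F_weight ..
  have ZH_eq: "partition_fn n H = (\<Sum>\<tau>\<in>local_configs vs. WH \<tau>)"
    unfolding partition_fn_def WH_def group ..
  have marg_H: "marg_constr n H vs \<tau> = WH \<tau> / partition_fn n H" for \<tau>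
    by (simp add: marg_constr_def gibbs_def WH_def sum_divide_distrib)
  have "marg_constr n G vs \<tau> = w \<tau> * WH \<tau> / partition_fn n G"
    by (simp add: marg_constr_def gibbs_def sum_divide_distrib[symmetric] F_weight)
  also have "\<dots> = w \<tau> * marg_constr n H vs \<tau> / (\<Sum>\<tau>'\<in>local_configs vs. w \<tau>' * marg_constr n H vs \<tau>')"
    using ZH unfolding ZG marg_H by (simp add: sum_divide_distrib[symmetric] field_simps)
  finally show ?thesis by (simp add: H_def)
qed

lemma bp_error_nonneg: "0 \<le> bp_error n G i"
  unfolding bp_error_def by (simp add: sum_nonneg)

lemma bp_error_le_indep_defect:
  fixes G :: "'s::finite fgraph"
  assumes i: "i < length G" and pos: "positive_weights G" and "0 < wmin"
    and w: "\<forall>\<tau>. wmin \<le> fst (G!i) (map \<tau> (snd (G!i))) \<and> fst (G!i) (map \<tau> (snd (G!i))) \<le> wmax"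
  shows "bp_error n G i \<le> 2 * (wmax / wmin) * indep_defect n (del_constr G i) (snd (G!i))"
proof -
  define H where "H = del_constr G i"
  define vs where "vs = snd (G!i)"
  define w where "w \<tau> = fst (G!i) (map \<tau> vs)" for \<tau>
  define p where "p \<tau> = marg_constr n H vs \<tau>" for \<tau>
  define q where "q \<tau> = (\<Prod>x\<in>set vs. marg1 n H x (\<tau> x))" for \<tau>
  have PH: "gibbs_normalized n H"
    unfolding H_def by (rule gibbs_normalized_if_positive_weights[OF positive_weights_del_constr[OF pos]])
  have "bp_weight n G i \<tau> = w \<tau> * q \<tau>" for \<tau>
    by (simp add: bp_weight_def w_def vs_def q_def cavity_def H_def)
  moreover have "marg_constr n G vs \<tau> = w \<tau> * p \<tau> / (\<Sum>\<tau>'\<in>local_configs vs. w \<tau>' * p \<tau>')" for \<tau>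
    unfolding p_def w_def vs_def H_def by (rule marg_constr_eq_tilt_del_constr[OF i pos])
  ultimately have "bp_error n G i = (\<Sum>\<tau>\<in>local_configs vs.
      \<bar>w \<tau> * p \<tau> / (\<Sum>\<tau>'\<in>local_configs vs. w \<tau>' * p \<tau>') - w \<tau> * q \<tau> / (\<Sum>\<tau>'\<in>local_configs vs. w \<tau>' * q \<tau>')\<bar>)"
    by (simp add: bp_error_def vs_def)
  also have "\<dots> \<le> 2 * (wmax / wmin) * (\<Sum>\<tau>\<in>local_configs vs. \<bar>p \<tau> - q \<tau>\<bar>)"
  proof (rule sum_abs_diff_tilted_le)
    show "\<forall>\<tau>\<in>local_configs vs. 0 \<le> p \<tau>" using marg_constr_nonneg[OF PH] by (simp add: p_def)
    show "\<forall>\<tau>\<in>local_configs vs. 0 \<le> q \<tau>" using marg1_nonneg[OF PH] by (simp add: q_def prod_nonneg)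
    have "(\<Sum>\<tau>\<in>(local_configs vs :: (nat \<Rightarrow> 's) set). p \<tau>) = (\<Sum>\<sigma>\<in>configs n. gibbs n H \<sigma>)"
      unfolding p_def marg_constr_def by (rule sum.group) (auto simp: local_configs_def finite_PiE)
    then show "(\<Sum>\<tau>\<in>local_configs vs. p \<tau>) = 1" using PH by (simp add: gibbs_normalized_def)
  qed (use \<open>0 < wmin\<close> w in \<open>auto simp: w_def vs_def\<close>)
  also have "(\<Sum>\<tau>\<in>local_configs vs. \<bar>p \<tau> - q \<tau>\<bar>) = indep_defect n H vs"
    by (simp add: indep_defect_def p_def q_def)
  finally show ?thesis by (simp add: H_def vs_def)
qed


section \<open>Removing a constraint node from the Poisson factor graph\<close>

lemma nn_integral_measure_pmf_swap:
  "(\<integral>\<^sup>+x. \<integral>\<^sup>+y. f x y \<partial>measure_pmf B \<partial>measure_pmf A) = (\<integral>\<^sup>+y. \<integral>\<^sup>+x. f x y \<partial>measure_pmf A \<partial>measure_pmf B)"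
proof -
  have "(\<integral>\<^sup>+x. \<integral>\<^sup>+y. f x y \<partial>B \<partial>A) = (\<integral>\<^sup>+z. f (fst z) (snd z) \<partial>pair_pmf A B)"
    by (simp add: nn_integral_pair_pmf')
  also have "\<dots> = (\<integral>\<^sup>+z. f (snd z) (fst z) \<partial>pair_pmf B A)"
    by (subst pair_commute_pmf) (simp add: split_beta)
  also have "\<dots> = (\<integral>\<^sup>+y. \<integral>\<^sup>+x. f x y \<partial>A \<partial>B)"
    by (simp add: nn_integral_pair_pmf')
  finally show ?thesis .
qed

text \<open>Mecke's formula for \<open>m\<close> i.i.d. draws.\<close>

lemma nn_integral_replicate_pmf_sum_remove_nth:
  fixes g :: "'a list \<Rightarrow> 'a \<Rightarrow> ennreal"
  shows "(\<integral>\<^sup>+G. (\<Sum>i<length G. g (take i G @ drop (Suc i) G) (G!i)) \<partial>replicate_pmf m p)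
    = of_nat m * (\<integral>\<^sup>+H. \<integral>\<^sup>+a. g H a \<partial>p \<partial>replicate_pmf (m - 1) p)"
proof (induction m arbitrary: g)
  case 0
  then show ?case by simp
next
  case (Suc m)
  let ?K = "\<lambda>G. \<integral>\<^sup>+a. g G a \<partial>p"
  let ?R = "\<lambda>x xs. \<Sum>i<length xs. g (x # (take i xs @ drop (Suc i) xs)) (xs!i)"
  have rep_Suc: "(\<integral>\<^sup>+G. F G \<partial>replicate_pmf (Suc j) p) = (\<integral>\<^sup>+x. \<integral>\<^sup>+xs. F (x # xs) \<partial>replicate_pmf j p \<partial>p)"
    for F and j by simp
  have split: "(\<Sum>i<length (x # xs). g (take i (x # xs) @ drop (Suc i) (x # xs)) ((x # xs)!i))
      = g xs x + ?R x xs" for x xs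
    by (simp only: length_Cons sum.lessThan_Suc_shift) simp
  have first: "(\<integral>\<^sup>+x. \<integral>\<^sup>+xs. g xs x \<partial>replicate_pmf m p \<partial>p) = (\<integral>\<^sup>+G. ?K G \<partial>replicate_pmf m p)"
    by (rule nn_integral_measure_pmf_swap)
  have rest: "(\<integral>\<^sup>+x. \<integral>\<^sup>+xs. ?R x xs \<partial>replicate_pmf m p \<partial>p) = of_nat m * (\<integral>\<^sup>+G. ?K G \<partial>replicate_pmf m p)"
  proof (cases m)
    case 0 then show ?thesis by simp
  next
    case (Suc m')
    have "(\<integral>\<^sup>+x. \<integral>\<^sup>+xs. ?R x xs \<partial>replicate_pmf m p \<partial>p)
        = (\<integral>\<^sup>+x. of_nat m * (\<integral>\<^sup>+H. ?K (x # H) \<partial>replicate_pmf m' p) \<partial>p)"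
      using Suc.IH[of "\<lambda>H. g (x # H)" for x] Suc by (simp del: replicate_pmf.simps)
    also have "\<dots> = of_nat m * (\<integral>\<^sup>+x. \<integral>\<^sup>+H. ?K (x # H) \<partial>replicate_pmf m' p \<partial>p)"
      by (simp add: nn_integral_cmult)
    also have "\<dots> = of_nat m * (\<integral>\<^sup>+G. ?K G \<partial>replicate_pmf m p)"
      using Suc by (simp only: rep_Suc)
    finally show ?thesis .
  qed
  have "(\<integral>\<^sup>+G. (\<Sum>i<length G. g (take i G @ drop (Suc i) G) (G!i)) \<partial>replicate_pmf (Suc m) p)
      = (\<integral>\<^sup>+x. (\<integral>\<^sup>+xs. g xs x \<partial>replicate_pmf m p) + (\<integral>\<^sup>+xs. ?R x xs \<partial>replicate_pmf m p) \<partial>p)"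
    by (simp only: rep_Suc split) (intro nn_integral_cong nn_integral_add; simp)
  also have "\<dots> = (\<integral>\<^sup>+G. ?K G \<partial>replicate_pmf m p) + of_nat m * (\<integral>\<^sup>+G. ?K G \<partial>replicate_pmf m p)"
    by (subst nn_integral_add) (simp_all add: first rest)
  finally show ?case by (simp add: algebra_simps)
qed

text \<open>Size-biasing a Poisson variable shifts it by one: \<open>m \<cdot> P(Po(\<lambda>) = m) = \<lambda> \<cdot> P(Po(\<lambda>) = m - 1)\<close>.\<close>

lemma nn_integral_poisson_pmf_size_bias:
  fixes h :: "nat \<Rightarrow> ennreal"
  assumes l: "0 < l"
  shows "(\<integral>\<^sup>+m. of_nat m * h (m - 1) \<partial>poisson_pmf l) = ennreal l * (\<integral>\<^sup>+m. h m \<partial>poisson_pmf l)"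
proof -
  define F where "F = (\<lambda>m. ennreal (pmf (poisson_pmf l) m) * (of_nat m * h (m - 1)))"
  have F_Suc: "F (Suc m) = ennreal l * (ennreal (pmf (poisson_pmf l) m) * h m)" for m
  proof -
    have r: "pmf (poisson_pmf l) (Suc m) * real (Suc m) = l * pmf (poisson_pmf l) m"
      using l by (simp add: field_simps del: of_nat_Suc)
    have "F (Suc m) = ennreal (pmf (poisson_pmf l) (Suc m) * real (Suc m)) * h m"
      by (simp add: F_def ennreal_of_nat_eq_real_of_nat ennreal_mult' mult.assoc del: of_nat_Suc)
    also have "\<dots> = ennreal l * (ennreal (pmf (poisson_pmf l) m) * h m)"
      unfolding r by (simp only: ennreal_mult[OF less_imp_le[OF l] pmf_nonneg] mult.assoc)
    finally show ?thesis .
  qed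
  have "(\<lambda>m. F (Suc m)) sums (\<Sum>m. F (Suc m))" by (rule summable_sums) simp
  then have "F sums ((\<Sum>m. F (Suc m)) + F 0)" by (rule sums_Suc)
  then have "suminf F = (\<Sum>m. F (Suc m))" by (simp add: F_def sums_iff)
  also have "\<dots> = ennreal l * (\<Sum>m. ennreal (pmf (poisson_pmf l) m) * h m)"
    unfolding F_Suc by (rule ennreal_suminf_cmult)
  finally show ?thesis
    by (simp add: nn_integral_measure_pmf nn_integral_count_space_nat F_def)
qed

lemma nn_integral_random_fg_sum_del_constr:
  assumes "0 < d" "0 < n" "0 < k"
  shows "(\<integral>\<^sup>+G. (\<Sum>i<length G. g (del_constr G i) (G!i)) \<partial>random_fg n d k \<rho>)
    = ennreal (d * real n / real k) * (\<integral>\<^sup>+H. \<integral>\<^sup>+a. g H a \<partial>constr_pmf n k \<rho> \<partial>random_fg n d k \<rho>)"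
proof -
  let ?l = "d * real n / real k"
  have "(\<integral>\<^sup>+G. (\<Sum>i<length G. g (del_constr G i) (G!i)) \<partial>random_fg n d k \<rho>)
      = (\<integral>\<^sup>+m. of_nat m * (\<integral>\<^sup>+H. \<integral>\<^sup>+a. g H a \<partial>constr_pmf n k \<rho> \<partial>replicate_pmf (m - 1) (constr_pmf n k \<rho>))
          \<partial>poisson_pmf ?l)"
    unfolding random_fg_def del_constr_def by (simp add: nn_integral_replicate_pmf_sum_remove_nth)
  also have "\<dots> = ennreal ?l * (\<integral>\<^sup>+H. \<integral>\<^sup>+a. g H a \<partial>constr_pmf n k \<rho> \<partial>random_fg n d k \<rho>)"
    using assms by (subst nn_integral_poisson_pmf_size_bias) (simp_all add: random_fg_def)
  finally show ?thesis .
qed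

lemma constr_pmf_eq_pair_pmf_var_tuples: "constr_pmf n k \<rho> = pair_pmf \<rho> (pmf_of_set (var_tuples n k))"
  by (simp add: constr_pmf_def var_tuples_def conj_commute)

lemma var_tuples_nonempty: "0 < n \<Longrightarrow> var_tuples n k \<noteq> {}"
  by (auto simp: var_tuples_def intro!: exI[of _ "replicate k 0"])

lemma set_pmf_constr_pmf: "0 < n \<Longrightarrow> set_pmf (constr_pmf n k \<rho>) = set_pmf \<rho> \<times> var_tuples n k"
  by (simp add: constr_pmf_eq_pair_pmf_var_tuples var_tuples_nonempty)

lemma nn_integral_constr_pmf_indep_defect:
  assumes "0 < n"
  shows "(\<integral>\<^sup>+a. ennreal (indep_defect n H (snd a)) \<partial>constr_pmf n k \<rho>)
    = ennreal ((\<Sum>vs\<in>var_tuples n k. indep_defect n H vs) / real (card (var_tuples n k)))"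
proof -
  have ne: "var_tuples n k \<noteq> {}" using var_tuples_nonempty[OF assms] .
  have "(\<integral>\<^sup>+a. ennreal (indep_defect n H (snd a)) \<partial>constr_pmf n k \<rho>)
      = (\<Sum>vs\<in>var_tuples n k. ennreal (indep_defect n H vs)) / of_nat (card (var_tuples n k))"
    unfolding constr_pmf_eq_pair_pmf_var_tuples using ne
    by (simp add: nn_integral_pair_pmf' nn_integral_pmf_of_set measure_pmf.emeasure_space_1)
  also have "\<dots> = ennreal (\<Sum>vs\<in>var_tuples n k. indep_defect n H vs) / ennreal (real (card (var_tuples n k)))"
    by (simp add: indep_defect_nonneg sum_ennreal ennreal_of_nat_eq_real_of_nat)
  also have "\<dots> = ennreal ((\<Sum>vs\<in>var_tuples n k. indep_defect n H vs) / real (card (var_tuples n k)))"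
    using ne by (intro divide_ennreal) (auto simp: sum_nonneg indep_defect_nonneg card_gt_0_iff)
  finally show ?thesis .
qed

lemma sqrt_le_add_divide:
  assumes "0 \<le> x" "0 < e"
  shows "sqrt x \<le> e + x / (4 * e)"
proof -
  have "0 \<le> (sqrt x - 2 * e)\<^sup>2" by simp
  then have "4 * e * sqrt x \<le> x + 4 * e\<^sup>2"
    using assms by (simp add: power2_eq_square algebra_simps)
  then show ?thesis using assms by (simp add: field_simps power2_eq_square)
qed

text \<open>
  Bounding \<open>\<surd>x \<le> e + x / (4 e)\<close> keeps the estimate linear in \<open>tv_decorr\<close>, so that it survives
  taking expectations without a Jensen argument.
\<close>

lemma mean_indep_defect_le:
  fixes G :: "'s::finite fgraph"
  assumes P: "gibbs_normalized n G" and "0 < n" "0 < e"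
  shows "(\<Sum>vs\<in>var_tuples n k. indep_defect n G vs) / real (card (var_tuples n k))
    \<le> real k * real CARD('s) ^ k * (e + tv_decorr n G / (real n)\<^sup>2 / e)"
proof -
  let ?S = "\<Sum>vs\<in>var_tuples n k. indep_defect n G vs"
  let ?c = "real k * real CARD('s) ^ k"
  have n: "0 < real n" using \<open>0 < n\<close> by simp
  have "?S / real (card (var_tuples n k)) = (real n * ?S) / (real n * real n ^ k)"
    using n by (simp add: card_var_tuples)
  also have "\<dots> \<le> (real k * real n ^ k * real CARD('s) ^ k * sqrt (2 * tv_decorr n G)) / (real n * real n ^ k)"
    using sum_indep_defect_le[OF P, of k] n by (intro divide_right_mono) auto
  also have "\<dots> = ?c * sqrt (2 * tv_decorr n G / (real n)\<^sup>2)"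
    using n by (simp add: real_sqrt_divide field_simps)
  also have "\<dots> \<le> ?c * (e + 2 * tv_decorr n G / (real n)\<^sup>2 / (4 * e))"
    using tv_decorr_nonneg[of n G] \<open>0 < e\<close> by (intro mult_left_mono sqrt_le_add_divide) auto
  also have "\<dots> \<le> ?c * (e + tv_decorr n G / (real n)\<^sup>2 / e)"
    using tv_decorr_nonneg[of n G] \<open>0 < e\<close> n by (intro mult_left_mono add_left_mono) (auto simp: field_simps)
  finally show ?thesis .
qed

definition psi_values :: "('s list \<Rightarrow> real) set \<Rightarrow> nat \<Rightarrow> real set" where
  "psi_values \<Psi> k = (\<lambda>(\<psi>, \<sigma>). \<psi> \<sigma>) ` (\<Psi> \<times> {\<sigma>. length \<sigma> = k})"

definition psi_ratio :: "('s list \<Rightarrow> real) set \<Rightarrow> nat \<Rightarrow> real" where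
  "psi_ratio \<Psi> k = Max (psi_values \<Psi> k) / Min (psi_values \<Psi> k)"

locale poisson_factor_graph =
  fixes d :: real and k n :: nat and \<Psi> :: "('s::finite list \<Rightarrow> real) set"
    and \<rho> :: "('s list \<Rightarrow> real) pmf"
  assumes d_pos: "0 < d" and k_pos: "0 < k" and n_pos: "0 < n"
    and Psi_fin: "finite \<Psi>" and Psi_ne: "\<Psi> \<noteq> {}"
    and Psi_pos: "\<forall>\<psi>\<in>\<Psi>. \<forall>\<sigma>::'s list. length \<sigma> = k \<longrightarrow> \<psi> \<sigma> > 0"
    and rho_on_Psi: "set_pmf \<rho> \<subseteq> \<Psi>"
begin

lemma set_pmf_random_fg_constr:
  assumes "G \<in> set_pmf (random_fg n d k \<rho>)" "a \<in> set G"
  shows "fst a \<in> \<Psi> \<and> length (snd a) = k"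
proof -
  have "a \<in> set_pmf \<rho> \<times> var_tuples n k"
    using assms n_pos by (auto simp: random_fg_def set_replicate_pmf set_pmf_constr_pmf)
  then show ?thesis using rho_on_Psi by (auto simp: var_tuples_def)
qed

lemma positive_weights_random_fg:
  "G \<in> set_pmf (random_fg n d k \<rho>) \<Longrightarrow> positive_weights G"
  using set_pmf_random_fg_constr Psi_pos by (auto simp: positive_weights_def)

lemma psi_values_bounds:
  assumes "\<psi> \<in> \<Psi>" "length \<sigma> = k"
  shows "0 < Min (psi_values \<Psi> k) \<and> Min (psi_values \<Psi> k) \<le> \<psi> \<sigma> \<and> \<psi> \<sigma> \<le> Max (psi_values \<Psi> k)"
proof -
  have "finite {\<sigma>::'s list. length \<sigma> = k}"
    using finite_lists_length_eq[of "UNIV::'s set" k] by simp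
  then have fin: "finite (psi_values \<Psi> k)" unfolding psi_values_def using Psi_fin by simp
  have in_values: "\<psi> \<sigma> \<in> psi_values \<Psi> k" unfolding psi_values_def using assms by force
  moreover have "\<forall>x\<in>psi_values \<Psi> k. 0 < x" unfolding psi_values_def using Psi_pos by auto
  ultimately have "0 < Min (psi_values \<Psi> k)" using fin by (subst Min_gr_iff) auto
  then show ?thesis using Min_le[OF fin in_values] Max_ge[OF fin in_values] by simp
qed

lemma bp_error_random_fg_le:
  assumes G: "G \<in> set_pmf (random_fg n d k \<rho>)" and i: "i < length G"
  shows "bp_error n G i \<le> 2 * psi_ratio \<Psi> k * indep_defect n (del_constr G i) (snd (G!i))"
proof -
  have \<psi>: "fst (G!i) \<in> \<Psi>" and len: "length (snd (G!i)) = k"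
    using set_pmf_random_fg_constr[OF G nth_mem[OF i]] by auto
  show ?thesis unfolding psi_ratio_def
  proof (rule bp_error_le_indep_defect[OF i positive_weights_random_fg[OF G]])
    show "0 < Min (psi_values \<Psi> k)" using psi_values_bounds[OF \<psi>, of "replicate k undefined"] by simp
    show "\<forall>\<tau>. Min (psi_values \<Psi> k) \<le> fst (G!i) (map \<tau> (snd (G!i)))
        \<and> fst (G!i) (map \<tau> (snd (G!i))) \<le> Max (psi_values \<Psi> k)"
      using psi_values_bounds[OF \<psi>] len by simp
  qed
qed

lemma psi_ratio_nonneg: "0 \<le> psi_ratio \<Psi> k"
proof -
  obtain \<psi> where "\<psi> \<in> \<Psi>" using Psi_ne by blast
  from psi_values_bounds[OF this, of "replicate k undefined"] show ?thesis
    unfolding psi_ratio_def by simp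
qed

lemma expectation_sum_bp_error_le:
  assumes "0 < e"
  defines "X \<equiv> random_fg n d k \<rho>"
  shows "measure_pmf.expectation X (\<lambda>G. \<Sum>i<length G. bp_error n G i)
    \<le> d * real n / real k * (2 * psi_ratio \<Psi> k * real k * real CARD('s) ^ k) *
       (e + (\<Sum>i<n. \<Sum>j<n. measure_pmf.expectation X (\<lambda>G. tv_pair n G i j)) / (real n)\<^sup>2 / e)"
proof -
  define l where "l = d * real n / real k"
  define C where "C = 2 * psi_ratio \<Psi> k * real k * real CARD('s) ^ k"
  define B where "B H = C * (e + tv_decorr n H / (real n)\<^sup>2 / e)" for H :: "'s fgraph"
  have C: "0 \<le> C" using psi_ratio_nonneg by (simp add: C_def)
  have B0: "0 \<le> B H" for H using C \<open>0 < e\<close> tv_decorr_nonneg[of n H] by (simp add: B_def)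
  have "(\<integral>\<^sup>+G. ennreal (\<Sum>i<length G. bp_error n G i) \<partial>X)
      \<le> (\<integral>\<^sup>+G. (\<Sum>i<length G. ennreal (2 * psi_ratio \<Psi> k * indep_defect n (del_constr G i) (snd (G!i)))) \<partial>X)"
  proof (intro nn_integral_mono_AE, unfold AE_measure_pmf_iff, intro ballI)
    fix G assume "G \<in> set_pmf X"
    then have "ennreal (\<Sum>i<length G. bp_error n G i)
        \<le> ennreal (\<Sum>i<length G. 2 * psi_ratio \<Psi> k * indep_defect n (del_constr G i) (snd (G!i)))"
      unfolding X_def by (intro ennreal_leI sum_mono bp_error_random_fg_le) auto
    also have "\<dots> = (\<Sum>i<length G. ennreal (2 * psi_ratio \<Psi> k * indep_defect n (del_constr G i) (snd (G!i))))"
      by (rule sum_ennreal[symmetric]) (simp add: psi_ratio_nonneg indep_defect_nonneg)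
    finally show "ennreal (\<Sum>i<length G. bp_error n G i)
        \<le> (\<Sum>i<length G. ennreal (2 * psi_ratio \<Psi> k * indep_defect n (del_constr G i) (snd (G!i))))" .
  qed
  also have "\<dots> = ennreal l * (\<integral>\<^sup>+H. \<integral>\<^sup>+a. ennreal (2 * psi_ratio \<Psi> k * indep_defect n H (snd a))
      \<partial>constr_pmf n k \<rho> \<partial>X)"
    unfolding X_def l_def using d_pos n_pos k_pos by (rule nn_integral_random_fg_sum_del_constr)
  also have "\<dots> \<le> ennreal l * (\<integral>\<^sup>+H. ennreal (B H) \<partial>X)"
  proof (intro mult_left_mono nn_integral_mono_AE, unfold AE_measure_pmf_iff, intro ballI)
    fix H assume "H \<in> set_pmf X"
    then have P: "gibbs_normalized n H"
      unfolding X_def by (intro gibbs_normalized_if_positive_weights positive_weights_random_fg)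
    have "(\<integral>\<^sup>+a. ennreal (2 * psi_ratio \<Psi> k * indep_defect n H (snd a)) \<partial>constr_pmf n k \<rho>)
        = ennreal (2 * psi_ratio \<Psi> k) * (\<integral>\<^sup>+a. ennreal (indep_defect n H (snd a)) \<partial>constr_pmf n k \<rho>)"
    proof -
      have eq: "ennreal (2 * psi_ratio \<Psi> k * indep_defect n H vs)
          = ennreal (2 * psi_ratio \<Psi> k) * ennreal (indep_defect n H vs)" for vs
        by (rule ennreal_mult) (simp_all add: psi_ratio_nonneg indep_defect_nonneg)
      show ?thesis unfolding eq by (simp add: nn_integral_cmult)
    qed
    also have "\<dots> \<le> ennreal (B H)"
    proof -
      define mean where
        "mean = (\<Sum>vs\<in>var_tuples n k. indep_defect n H vs) / real (card (var_tuples n k))"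
      have mean: "0 \<le> mean" by (simp add: mean_def sum_nonneg indep_defect_nonneg)
      have R: "0 \<le> 2 * psi_ratio \<Psi> k" using psi_ratio_nonneg by simp
      have "2 * psi_ratio \<Psi> k * mean
          \<le> 2 * psi_ratio \<Psi> k * (real k * real CARD('s) ^ k * (e + tv_decorr n H / (real n)\<^sup>2 / e))"
        using mean_indep_defect_le[OF P n_pos \<open>0 < e\<close>, of k] R by (intro mult_left_mono) (simp_all add: mean_def)
      also have "\<dots> = B H" by (simp add: B_def C_def mult_ac)
      finally have "2 * psi_ratio \<Psi> k * mean \<le> B H" .
      then show ?thesis
        unfolding nn_integral_constr_pmf_indep_defect[OF n_pos] mean_def[symmetric] ennreal_mult[OF R mean, symmetric]
        by (rule ennreal_leI)
    qed
    finally show "(\<integral>\<^sup>+a. ennreal (2 * psi_ratio \<Psi> k * indep_defect n H (snd a)) \<partial>constr_pmf n k \<rho>)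
        \<le> ennreal (B H)" .
  qed simp
  finally have nn_le: "(\<integral>\<^sup>+G. ennreal (\<Sum>i<length G. bp_error n G i) \<partial>X) \<le> ennreal l * (\<integral>\<^sup>+H. ennreal (B H) \<partial>X)" .
  have tv_int: "integrable X (\<lambda>G. tv_pair n G i j)" for i j
  proof (rule measure_pmf.integrable_const_bound[where B="real CARD('s) ^ 2"])
    show "AE G in X. norm (tv_pair n G i j) \<le> real CARD('s) ^ 2"
      unfolding AE_measure_pmf_iff X_def
      by (auto intro!: tv_pair_le gibbs_normalized_if_positive_weights positive_weights_random_fg
          simp: tv_pair_nonneg)
  qed simp
  have B_int: "integrable X B" and B_eq: "(\<integral>H. B H \<partial>X)
      = C * (e + (\<Sum>i<n. \<Sum>j<n. measure_pmf.expectation X (\<lambda>G. tv_pair n G i j)) / (real n)\<^sup>2 / e)"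
  proof -
    have B_alt: "B = (\<lambda>H. C * e + C / ((real n)\<^sup>2 * e) * tv_decorr n H)"
      by (simp add: B_def fun_eq_iff distrib_left)
    show "integrable X B" "(\<integral>H. B H \<partial>X)
        = C * (e + (\<Sum>i<n. \<Sum>j<n. measure_pmf.expectation X (\<lambda>G. tv_pair n G i j)) / (real n)\<^sup>2 / e)"
      unfolding B_alt tv_decorr_def using tv_int by (simp_all add: distrib_left)
  qed
  have "measure_pmf.expectation X (\<lambda>G. \<Sum>i<length G. bp_error n G i)
      = enn2real (\<integral>\<^sup>+G. ennreal (\<Sum>i<length G. bp_error n G i) \<partial>X)"
    by (intro integral_eq_nn_integral) (simp_all add: bp_error_nonneg sum_nonneg)
  also have "\<dots> \<le> l * (\<integral>H. B H \<partial>X)"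
  proof (rule enn2real_leI)
    have "0 \<le> l" using d_pos k_pos by (simp add: l_def)
    moreover have "0 \<le> (\<integral>H. B H \<partial>X)" using B0 by (simp add: integral_nonneg)
    moreover have "(\<integral>\<^sup>+H. ennreal (B H) \<partial>X) = ennreal (\<integral>H. B H \<partial>X)"
      using B_int B0 by (intro nn_integral_eq_integral) auto
    ultimately show "0 \<le> l * (\<integral>H. B H \<partial>X)"
      and "(\<integral>\<^sup>+G. ennreal (\<Sum>i<length G. bp_error n G i) \<partial>X) \<le> ennreal (l * (\<integral>H. B H \<partial>X))"
      using nn_le by (simp_all add: ennreal_mult)
  qed
  finally show ?thesis using k_pos by (simp add: B_eq l_def C_def mult_ac)
qed

lemma mean_bp_error_le:
  assumes "0 < e"
  shows "(1 / real n) * measure_pmf.expectation (random_fg n d k \<rho>) (\<lambda>G. \<Sum>i<length G. bp_error n G i)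
    \<le> 2 * d * psi_ratio \<Psi> k * real CARD('s) ^ k * (e + (1 / (real n)\<^sup>2) *
      (\<Sum>i<n. \<Sum>j<n. measure_pmf.expectation (random_fg n d k \<rho>) (\<lambda>G. tv_pair n G i j)) / e)"
proof -
  have "(1 / real n) * measure_pmf.expectation (random_fg n d k \<rho>) (\<lambda>G. \<Sum>i<length G. bp_error n G i)
      \<le> (1 / real n) * (d * real n / real k * (2 * psi_ratio \<Psi> k * real k * real CARD('s) ^ k) * (e +
        (\<Sum>i<n. \<Sum>j<n. measure_pmf.expectation (random_fg n d k \<rho>) (\<lambda>G. tv_pair n G i j)) / (real n)\<^sup>2 / e))"
    using expectation_sum_bp_error_le[OF assms] n_pos by (intro mult_left_mono) auto
  then show ?thesis using n_pos k_pos by (simp add: field_simps)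
qed

end

lemma tendsto_zero_if_eps_bound:
  fixes a b :: "nat \<Rightarrow> real"
  assumes b: "b \<longlonglongrightarrow> 0" and a0: "\<And>n. 0 \<le> a n" and "0 \<le> K"
    and bound: "\<And>n e. 0 < n \<Longrightarrow> 0 < e \<Longrightarrow> a n \<le> K * (e + b n / e)"
  shows "a \<longlonglongrightarrow> 0"
proof (rule order_tendstoI)
  fix r :: real assume "r < 0"
  then show "\<forall>\<^sub>F n in sequentially. r < a n" using a0 by (intro always_eventually) (auto intro: less_le_trans)
next
  fix r :: real assume "0 < r"
  define e where "e = r / (2 * (K + 1))"
  have e: "0 < e" "K * e < r / 2" using \<open>0 < r\<close> \<open>0 \<le> K\<close> by (auto simp: e_def field_simps)
  have "(\<lambda>n. K / e * b n) \<longlonglongrightarrow> 0" by (intro tendsto_mult_right_zero b)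
  then have "\<forall>\<^sub>F n in sequentially. K / e * b n < r / 2" using \<open>0 < r\<close> by (intro order_tendstoD) auto
  moreover have "\<forall>\<^sub>F n in sequentially. 0 < n" by (rule eventually_gt_at_top)
  ultimately show "\<forall>\<^sub>F n in sequentially. a n < r"
  proof eventually_elim
    case (elim n)
    have "a n \<le> K * e + K / e * b n" using bound[OF elim(2) e(1)] e(1) by (simp add: field_simps)
    then show ?case using elim(1) e(2) by linarith
  qed
qed

theorem lemma10:
  fixes d :: real and k :: nat
    and \<Psi> :: "('s::finite list \<Rightarrow> real) set"
    and \<rho> :: "('s list \<Rightarrow> real) pmf"
  assumes d_pos: "d > 0"
    and k_ge: "k \<ge> 3"
    and Psi_fin: "finite \<Psi>" and Psi_ne: "\<Psi> \<noteq> {}"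
    and Psi_pos: "\<forall>\<psi>\<in>\<Psi>. \<forall>\<sigma>::'s list. length \<sigma> = k \<longrightarrow> \<psi> \<sigma> > 0"
    and rho_on_Psi: "set_pmf \<rho> \<subseteq> \<Psi>"
    and decorr: "(\<lambda>n. (1 / (real n)^2) *
        (\<Sum>i<n. \<Sum>j<n. measure_pmf.expectation (random_fg n d k \<rho>)
                          (\<lambda>G. tv_pair n G i j))) \<longlonglongrightarrow> 0"
  shows "(\<lambda>n. (1 / real n) *
        measure_pmf.expectation (random_fg n d k \<rho>)
          (\<lambda>G. \<Sum>i<length G. bp_error n G i)) \<longlonglongrightarrow> 0"
proof (rule tendsto_zero_if_eps_bound[OF decorr, where K = "2 * d * psi_ratio \<Psi> k * real CARD('s) ^ k"])
  have model: "poisson_factor_graph d k n \<Psi> \<rho>" if "0 < n" for n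
    using that assms by unfold_locales auto
  show "0 \<le> 2 * d * psi_ratio \<Psi> k * real CARD('s) ^ k"
    using poisson_factor_graph.psi_ratio_nonneg[OF model[of 1]] d_pos by simp
  show "0 \<le> (1 / real n) * measure_pmf.expectation (random_fg n d k \<rho>) (\<lambda>G. \<Sum>i<length G. bp_error n G i)"
    for n by (simp add: bp_error_nonneg sum_nonneg)
  show "(1 / real n) * measure_pmf.expectation (random_fg n d k \<rho>) (\<lambda>G. \<Sum>i<length G. bp_error n G i)
      \<le> 2 * d * psi_ratio \<Psi> k * real CARD('s) ^ k * (e + (1 / (real n)\<^sup>2) *
        (\<Sum>i<n. \<Sum>j<n. measure_pmf.expectation (random_fg n d k \<rho>) (\<lambda>G. tv_pair n G i j)) / e)"
    if "0 < n" "0 < e" for n e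
    by (rule poisson_factor_graph.mean_bp_error_le[OF model[OF that(1)] that(2)])
qed

end
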